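(* Let $A$ be a nonzero commutative nilpotent $\mathbb{F}_p$-algebra of finite dimension with $A^e\ne0$, $A^{e+1}=0$, let $t_r=\dim_{\mathbb{F}_p}(N_r/N_{r-1})$ for $1\le r\le e$, and let $t_M=\max_r t_r$. Then the number of ideals of $A$ is at least $p^{\lfloor t_M^2/4\rfloor}$.
   Context: Algebras are commutative, associative, not necessarily unital. $N_k=\{a\in A: x_1\cdots x_k a=0\ \forall x_1,\dots,x_k\in A\}$, $N_0=0$. *)

theory Defs
  imports Complex_Main "HOL-Computational_Algebra.Primes"
begin

fun nprod :: "'a::comm_ring list \<Rightarrow> 'a \<Rightarrow> 'a" where
  "nprod [] a = a"
| "nprod (x # xs) a = x * nprod xs a"

text \<open>N_k = {a. x1 ... xk a = 0 for all x1..xk}; in particular N_0 = {0}.\<close>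
definition annN :: "nat \<Rightarrow> 'a::comm_ring set" where
  "annN k = {a. \<forall>xs. length xs = k \<longrightarrow> nprod xs a = 0}"

definition alg_pow :: "('k::field \<Rightarrow> 'a::comm_ring \<Rightarrow> 'a) \<Rightarrow> nat \<Rightarrow> 'a set" where
  "alg_pow scale k = module.span scale {nprod xs a | xs a. Suc (length xs) = k}"

definition comm_algebra :: "('k::field \<Rightarrow> 'a::comm_ring \<Rightarrow> 'a) \<Rightarrow> bool" where
  "comm_algebra scale \<longleftrightarrow> vector_space scale \<and>
     (\<forall>c x y. scale c (x * y) = scale c x * y)"

definition alg_ideal :: "('k::field \<Rightarrow> 'a::comm_ring \<Rightarrow> 'a) \<Rightarrow> 'a set \<Rightarrow> bool" where
  "alg_ideal scale I \<longleftrightarrow> module.subspace scale I \<and> (\<forall>a x. x \<in> I \<longrightarrow> a * x \<in> I)"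

definition quot_dim :: "('k::field \<Rightarrow> 'a::comm_ring \<Rightarrow> 'a) \<Rightarrow> 'a set \<Rightarrow> 'a set \<Rightarrow> nat" where
  "quot_dim scale U W = vector_space.dim scale U - vector_space.dim scale W"

end

theory Submission
  imports Defs "HOL-Library.FuncSet"
begin

text \<open>If \<open>x \<in> N\<^sub>r\<close> then \<open>a x \<in> N\<^sub>r\<^sub>-\<^sub>1\<close> for every \<open>a\<close>, so every subspace between \<open>N\<^sub>r\<^sub>-\<^sub>1\<close> and
  \<open>N\<^sub>r\<close> is an ideal. Choosing a basis of \<open>N\<^sub>r\<close> extending one of \<open>N\<^sub>r\<^sub>-\<^sub>1\<close> and splitting the
  \<open>t = t\<^sub>r\<close> new basis vectors into sets \<open>U\<close>, \<open>Y\<close> of sizes \<open>k\<close> and \<open>t - k\<close>, each of the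
  \<open>p\<^bsup>k(t-k)\<^esup>\<close> matrices \<open>c\<close> gives a different such subspace: the vectors whose
  \<open>Y\<close>-coordinates are obtained from their \<open>U\<close>-coordinates through \<open>c\<close>.
  Taking \<open>k = \<lfloor>t/2\<rfloor>\<close> gives \<open>k(t-k) = \<lfloor>t\<^sup>2/4\<rfloor>\<close>.\<close>

lemma nprod_append: "nprod (xs @ ys) a = nprod xs (nprod ys a)"
  by (induction xs) auto

lemma nprod_zero: "nprod xs 0 = 0"
  by (induction xs) auto

lemma nprod_add: "nprod xs (a + b) = nprod xs a + nprod xs b"
  by (induction xs) (auto simp: distrib_left)

lemma nprod_scale:
  assumes "comm_algebra scale"
  shows "nprod xs (scale c a) = scale c (nprod xs a)"
proof (induction xs)
  case (Cons x xs)
  have "scale c (nprod xs a * x) = scale c (nprod xs a) * x"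
    using assms unfolding comm_algebra_def by blast
  then show ?case using Cons by (simp add: mult.commute)
qed simp

lemma subspace_annN:
  assumes "comm_algebra scale"
  shows "module.subspace scale (annN r)"
proof -
  interpret vector_space scale using assms unfolding comm_algebra_def by blast
  show ?thesis unfolding subspace_def annN_def
    by (auto simp: nprod_zero nprod_add nprod_scale[OF assms])
qed

lemma annN_pred_subset:
  assumes "1 \<le> r"
  shows "annN (r - 1) \<subseteq> annN r"
proof
  fix a :: 'a assume a: "a \<in> annN (r - 1)"
  show "a \<in> annN r" unfolding annN_def
  proof (intro CollectI allI impI)
    fix xs :: "'a list" assume "length xs = r"
    with assms obtain y ys where "xs = y # ys" "length ys = r - 1" by (cases xs) auto
    with a show "nprod xs a = 0" unfolding annN_def by simp
  qed
qed

lemma mult_mem_annN_pred: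
  assumes "1 \<le> r" and "x \<in> annN r"
  shows "b * x \<in> annN (r - 1)"
  unfolding annN_def
proof (intro CollectI allI impI)
  fix ys :: "'a list" assume "length ys = r - 1"
  then have "nprod (ys @ [b]) x = 0" using assms unfolding annN_def by simp
  then show "nprod ys (b * x) = 0" by (simp add: nprod_append)
qed

lemma floor_half_mult_ceil_half: "(t::nat) div 2 * (t - t div 2) = t\<^sup>2 div 4"
  by (cases "even t") (auto elim!: evenE oddE simp: power2_eq_square algebra_simps)

context module begin

lemma finite_span:
  assumes "finite (UNIV :: 'a set)" and "finite B"
  shows "finite (span B)"
proof -
  have "span B = (\<lambda>u. \<Sum>v\<in>B. u v *s v) ` (B \<rightarrow>\<^sub>E UNIV)"
    unfolding span_finite[OF \<open>finite B\<close>]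
    by (auto simp: image_iff intro!: bexI[of _ "restrict _ B"] sum.cong)
  then show ?thesis
    using assms by (simp add: finite_PiE)
qed

end

text \<open>For disjoint \<open>U, Y \<subseteq> B\<close> this is the graph of the linear map with matrix \<open>c\<close> from the
  \<open>U\<close>-coordinates to the \<open>Y\<close>-coordinates; the coordinates outside \<open>U \<union> Y\<close> are free.\<close>

definition graph_subspace ::
    "('k::field \<Rightarrow> 'v::ab_group_add \<Rightarrow> 'v) \<Rightarrow> 'v set \<Rightarrow> 'v set \<Rightarrow> 'v set \<Rightarrow> ('v \<Rightarrow> 'v \<Rightarrow> 'k) \<Rightarrow> 'v set"
  where "graph_subspace scale B U Y c =
     {x \<in> module.span scale B. \<forall>v\<in>Y.
        module.representation scale B x v = (\<Sum>u\<in>U. c u v * module.representation scale B x u)}"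

context vector_space begin

lemma representation_sum_scale_basis:
  assumes "independent B" "finite S" "S \<subseteq> B"
  shows "representation B (\<Sum>b\<in>S. f b *s b) = (\<lambda>b. if b \<in> S then f b else 0)"
proof -
  have "representation B (\<Sum>b\<in>S. f b *s b) = (\<lambda>x. \<Sum>b\<in>S. representation B (f b *s b) x)"
    using assms by (intro representation_sum) (auto intro: span_scale span_base)
  also have "\<dots> = (\<lambda>x. \<Sum>b\<in>S. if x = b then f b else 0)"
    using assms
    by (intro ext sum.cong) (auto simp: representation_scale span_base representation_basis subset_iff)
  finally show ?thesis using \<open>finite S\<close> by simp
qed

lemma subspace_graph_subspace:
  assumes "independent B"
  shows "subspace (graph_subspace scale B U Y c)"
  unfolding subspace_def
proof (intro conjI ballI allI)
  show "0 \<in> graph_subspace scale B U Y c"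
    unfolding graph_subspace_def by (simp add: representation_zero span_zero)
  fix x y a assume x: "x \<in> graph_subspace scale B U Y c" and y: "y \<in> graph_subspace scale B U Y c"
  then have "x \<in> span B" "y \<in> span B" unfolding graph_subspace_def by auto
  then show "x + y \<in> graph_subspace scale B U Y c"
    using x y assms unfolding graph_subspace_def
    by (simp add: representation_add span_add sum.distrib distrib_left)
  show "a *s x \<in> graph_subspace scale B U Y c"
    using x \<open>x \<in> span B\<close> assms unfolding graph_subspace_def
    by (simp add: representation_scale span_scale sum_distrib_left mult.left_commute)
qed

lemma span_subset_graph_subspace:
  assumes B: "independent B"
  shows "span (B - (U \<union> Y)) \<subseteq> graph_subspace scale B U Y c"
proof
  fix x assume x: "x \<in> span (B - (U \<union> Y))"
  have "representation B x = representation (B - (U \<union> Y)) x"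
    using x B by (intro representation_extend) auto
  then have "representation B x b = 0" if "b \<in> U \<union> Y" for b
    using that representation_ne_zero by fastforce
  then show "x \<in> graph_subspace scale B U Y c"
    using x span_mono[of "B - (U \<union> Y)" B] unfolding graph_subspace_def by auto
qed

lemma graph_subspace_eqD:
  assumes "independent B" "U \<subseteq> B" "Y \<subseteq> B" "U \<inter> Y = {}" "finite U" "finite Y"
    and eq: "graph_subspace scale B U Y c = graph_subspace scale B U Y d"
    and u0: "u0 \<in> U" and v0: "v0 \<in> Y"
  shows "c u0 v0 = d u0 v0"
proof -
  \<comment> \<open>the point of the graph of \<open>c\<close> over the \<open>U\<close>-coordinate vector of \<open>u0\<close>\<close>
  define x where "x = (\<Sum>b\<in>insert u0 Y. (if b = u0 then 1 else c u0 b) *s b)"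
  have u0Y: "u0 \<notin> Y" using u0 assms by auto
  have Rx: "representation B x b = (if b = u0 then 1 else if b \<in> Y then c u0 b else 0)" for b
    unfolding x_def using assms u0 by (subst representation_sum_scale_basis) auto
  have sum_Rx: "(\<Sum>u\<in>U. e u v * representation B x u) = e u0 v" for e :: "'b \<Rightarrow> 'b \<Rightarrow> 'a" and v
  proof -
    have "(\<Sum>u\<in>U. e u v * representation B x u) = (\<Sum>u\<in>U. if u = u0 then e u v else 0)"
      using assms by (intro sum.cong) (auto simp: Rx)
    also have "\<dots> = e u0 v" using assms u0 by simp
    finally show ?thesis .
  qed
  have "x \<in> span B"
    unfolding x_def using assms u0 by (intro span_sum span_scale span_base) auto
  moreover have "representation B x v = (\<Sum>u\<in>U. c u v * representation B x u)" if "v \<in> Y" for v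
    using Rx[of v] that u0Y sum_Rx[of c v] by auto
  ultimately have "x \<in> graph_subspace scale B U Y c"
    unfolding graph_subspace_def by auto
  then have "representation B x v0 = d u0 v0"
    using eq v0 sum_Rx[of d v0] unfolding graph_subspace_def by auto
  moreover have "v0 \<noteq> u0" using v0 u0Y by blast
  ultimately show ?thesis using Rx[of v0] v0 by simp
qed

lemma inj_on_graph_subspace:
  assumes "independent B" "U \<subseteq> B" "Y \<subseteq> B" "U \<inter> Y = {}" "finite U" "finite Y"
  shows "inj_on (graph_subspace scale B U Y) (U \<rightarrow>\<^sub>E Y \<rightarrow>\<^sub>E (UNIV :: 'a set))"
proof (rule inj_onI)
  fix c d
  assume c: "c \<in> U \<rightarrow>\<^sub>E Y \<rightarrow>\<^sub>E UNIV" and d: "d \<in> U \<rightarrow>\<^sub>E Y \<rightarrow>\<^sub>E UNIV"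
    and eq: "graph_subspace scale B U Y c = graph_subspace scale B U Y d"
  show "c = d"
  proof (rule PiE_ext[OF c d])
    fix u assume u: "u \<in> U"
    show "c u = d u"
      by (rule PiE_ext[of _ Y "\<lambda>_. UNIV"]) (use c d u graph_subspace_eqD[OF assms eq u] in auto)
  qed
qed

lemma card_subspaces_between_ge:
  assumes V: "finite V" "subspace V" and W: "W \<subseteq> V" and k: "k \<le> dim V - dim W"
  shows "card (UNIV :: 'a set) ^ (k * (dim V - dim W - k)) \<le> card {I. subspace I \<and> W \<subseteq> I \<and> I \<subseteq> V}"
proof -
  obtain Bw where Bw: "Bw \<subseteq> W" "independent Bw" "W \<subseteq> span Bw" "card Bw = dim W"
    by (rule basis_exists)
  obtain B where B: "Bw \<subseteq> B" "B \<subseteq> V" "independent B" "V \<subseteq> span B"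
    using maximal_independent_subset_extend[of Bw V] Bw W by blast
  have span_B: "span B = V" using span_subspace B V by blast
  have fin_B: "finite B" using B V finite_subset by blast
  have "card (B - Bw) = dim V - dim W"
    using card_Diff_subset[OF finite_subset[OF B(1) fin_B] B(1)] basis_card_eq_dim[OF B(2,4,3)] Bw(4)
    by simp
  then obtain U where U: "U \<subseteq> B - Bw" "card U = k"
    using obtain_subset_with_card_n k by metis
  define Y where "Y = B - Bw - U"
  have fin: "finite U" "finite Y" using U fin_B finite_subset unfolding Y_def by auto
  have card_Y: "card Y = dim V - dim W - k"
    unfolding Y_def using card_Diff_subset[OF fin(1) U(1)] U \<open>card (B - Bw) = _\<close> by simp
  let ?P = "U \<rightarrow>\<^sub>E Y \<rightarrow>\<^sub>E (UNIV :: 'a set)"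
  have "span Bw \<subseteq> span (B - (U \<union> Y))"
    using B Bw U unfolding Y_def by (intro span_mono) auto
  then have "graph_subspace scale B U Y ` ?P \<subseteq> {I. subspace I \<and> W \<subseteq> I \<and> I \<subseteq> V}"
    using subspace_graph_subspace[OF B(3)] span_subset_graph_subspace[OF B(3)] Bw(3) span_B
    unfolding graph_subspace_def by blast
  moreover have "finite {I. subspace I \<and> W \<subseteq> I \<and> I \<subseteq> V}"
    using V(1) by (rule finite_subset[rotated, OF finite_Pow_iff[THEN iffD2]]) auto
  ultimately have "card (graph_subspace scale B U Y ` ?P) \<le> card {I. subspace I \<and> W \<subseteq> I \<and> I \<subseteq> V}"
    by (rule card_mono[rotated])
  moreover have "card (graph_subspace scale B U Y ` ?P) = card (UNIV :: 'a set) ^ (card Y * card U)"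
    using B U fin unfolding Y_def
    by (subst card_image[OF inj_on_graph_subspace]) (auto simp: card_PiE power_mult)
  ultimately show ?thesis using U card_Y by (simp add: mult.commute)
qed

end

lemma alg_ideal_if_subspace_between:
  assumes "module.subspace scale I" "W \<subseteq> I" "I \<subseteq> V" "\<And>a x. x \<in> V \<Longrightarrow> a * x \<in> W"
  shows "alg_ideal scale I"
  using assms unfolding alg_ideal_def by blast

theorem mainTheorem14:
  fixes scale :: "'k::field \<Rightarrow> 'a::comm_ring \<Rightarrow> 'a"
    and p e :: nat
  assumes "prime p"
    and "card (UNIV :: 'k set) = p"
    and "comm_algebra scale"
    and "\<exists>B. finite B \<and> module.span scale B = UNIV"
    and "\<exists>x::'a. x \<noteq> 0"
    and "alg_pow scale e \<noteq> {0}"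
    and "alg_pow scale (e + 1) = {0}"
  shows "card {I. alg_ideal scale I}
           \<ge> p ^ ((Max {quot_dim scale (annN r) (annN (r - 1)) | r. 1 \<le> r \<and> r \<le> e})\<^sup>2 div 4)"
proof -
  interpret A: vector_space scale using assms(3) unfolding comm_algebra_def by blast
  have "finite (UNIV :: 'k set)" using assms(1,2) prime_gt_0_nat card_ge_0_finite by metis
  then have fin_A: "finite (UNIV :: 'a set)" using assms(4) A.finite_span by metis
  have "e \<noteq> 0" using assms(6) unfolding alg_pow_def by (auto simp: A.span_empty)
  let ?S = "{quot_dim scale (annN r) (annN (r - 1)) | r. 1 \<le> r \<and> r \<le> e}"
  have "?S = (\<lambda>r. quot_dim scale (annN r) (annN (r - 1))) ` {1..e}" by auto
  then have "Max ?S \<in> ?S" using \<open>e \<noteq> 0\<close> by (intro Max_in) auto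
  then obtain r where r: "1 \<le> r" and max_eq: "Max ?S = quot_dim scale (annN r) (annN (r - 1))"
    by auto
  define t where "t = A.dim (annN r) - A.dim (annN (r - 1))"
  have "p ^ (t div 2 * (t - t div 2))
          \<le> card {I. A.subspace I \<and> annN (r - 1) \<subseteq> I \<and> I \<subseteq> annN r}"
    unfolding t_def assms(2)[symmetric]
    by (rule A.card_subspaces_between_ge[OF finite_subset[OF subset_UNIV fin_A]
          subspace_annN[OF assms(3)] annN_pred_subset[OF r] div_le_dividend])
  also have "\<dots> \<le> card {I. alg_ideal scale I}"
  proof (rule card_mono)
    show "finite {I. alg_ideal scale I}"
      by (rule finite_subset[OF subset_UNIV]) (simp add: Finite_Set.finite_set fin_A)
    show "{I. A.subspace I \<and> annN (r - 1) \<subseteq> I \<and> I \<subseteq> annN r} \<subseteq> {I. alg_ideal scale I}"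
      using alg_ideal_if_subspace_between[OF _ _ _ mult_mem_annN_pred[OF r]] by blast
  qed
  finally show ?thesis
    unfolding max_eq unfolding quot_dim_def t_def floor_half_mult_ceil_half .
qed

end
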